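(* There is no sequence $(a_n)_{n\ge0}$ of positive integers such that the graph $G=G((a_n)_{n\ge0})$ satisfies $p_{\mathrm{cut,E}}(G)<p_{\mathrm{cut,V}}(G)$.
   Context: For a sequence $(a_n)_{n\ge0}$ of positive integers, $G((a_n)_{n\ge0})$ is the multigraph with vertex set $\mathbb{N}=\{0,1,2,\dots\}$ and, for each $n\ge0$, exactly $a_n$ parallel edges between $n$ and $n+1$ (and no other edges). For a locally finite, connected, infinite (multi)graph $G=(V,E)$ and a vertex $x$ (the thresholds below do not depend on $x$; one may take $x=0$), consider Bernoulli$(p)$ bond percolation (each edge open independently with probability $p$), with law $\mathbb{P}_p$, expectation $\mathbb{E}_p$, and open cluster $C(x)$ of $x$. A vertex cutset separating $x$ from infinity is a set $\Pi_V\subset V$ such that the connected component of $x$ in $G$ with the vertices of $\Pi_V$ deleted is finite; an edge cutset is a set $\Pi_E\subset E$ such that the component of $x$ in $G$ with the edges of $\Pi_E$ deleted is finite. Define $p_{\mathrm{cut,E}}=\sup\{p\ge0:\inf_{\Pi_E}\mathbb{E}_p[|C(x)\cap\Pi_E|]=0\}$, where $C(x)\cap\Pi_E$ is the set of (open) edges of $C(x)$ lying in $\Pi_E$ and the infimum is over all edge cutsets separating $x$ from infinity, and $p_{\mathrm{cut,V}}=\sup\{p\ge0:\inf_{\Pi_V}\mathbb{E}_p[|C(x)\cap\Pi_V|]=0\}$, where $C(x)\cap\Pi_V$ is the set of vertices of $C(x)$ in $\Pi_V$ and the infimum is over all vertex cutsets separating $x$ from infinity. *)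

theory Defs
  imports "HOL-Probability.Probability"
begin

(* The multigraph G((a_n)): vertices nat; edge (n,k) with k < a n is the k-th
   parallel edge between n and n+1. *)
definition edges :: "(nat \<Rightarrow> nat) \<Rightarrow> (nat \<times> nat) set" where
  "edges a = {(n, k). k < a n}"

definition endpoints :: "nat \<times> nat \<Rightarrow> nat set" where
  "endpoints e = {fst e, Suc (fst e)}"

definition adj_of :: "(nat \<times> nat) set \<Rightarrow> (nat \<times> nat) set" where
  "adj_of F = {(u, v). \<exists>e\<in>F. endpoints e = {u, v}}"

definition perc :: "(nat \<Rightarrow> nat) \<Rightarrow> real \<Rightarrow> ((nat \<times> nat) \<Rightarrow> bool) measure" where
  "perc a p = PiM (edges a) (\<lambda>_. measure_pmf (bernoulli_pmf p))"

definition open_edges :: "(nat \<Rightarrow> nat) \<Rightarrow> ((nat \<times> nat) \<Rightarrow> bool) \<Rightarrow> (nat \<times> nat) set" where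
  "open_edges a \<omega> = {e \<in> edges a. \<omega> e}"

definition cluster_V :: "(nat \<Rightarrow> nat) \<Rightarrow> ((nat \<times> nat) \<Rightarrow> bool) \<Rightarrow> nat \<Rightarrow> nat set" where
  "cluster_V a \<omega> x = {v. (x, v) \<in> (adj_of (open_edges a \<omega>))\<^sup>*}"

definition cluster_E :: "(nat \<Rightarrow> nat) \<Rightarrow> ((nat \<times> nat) \<Rightarrow> bool) \<Rightarrow> nat \<Rightarrow> (nat \<times> nat) set" where
  "cluster_E a \<omega> x = {e \<in> open_edges a \<omega>. endpoints e \<inter> cluster_V a \<omega> x \<noteq> {}}"

definition comp_minus_E :: "(nat \<Rightarrow> nat) \<Rightarrow> (nat \<times> nat) set \<Rightarrow> nat \<Rightarrow> nat set" where
  "comp_minus_E a S x = {v. (x, v) \<in> (adj_of (edges a - S))\<^sup>*}"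

definition comp_minus_V :: "(nat \<Rightarrow> nat) \<Rightarrow> nat set \<Rightarrow> nat \<Rightarrow> nat set" where
  "comp_minus_V a S x =
     {v. x \<notin> S \<and> (x, v) \<in> (adj_of {e \<in> edges a. endpoints e \<inter> S = {}})\<^sup>*}"

definition edge_cutset :: "(nat \<Rightarrow> nat) \<Rightarrow> nat \<Rightarrow> (nat \<times> nat) set \<Rightarrow> bool" where
  "edge_cutset a x S \<longleftrightarrow> S \<subseteq> edges a \<and> finite (comp_minus_E a S x)"

definition vertex_cutset :: "(nat \<Rightarrow> nat) \<Rightarrow> nat \<Rightarrow> nat set \<Rightarrow> bool" where
  "vertex_cutset a x S \<longleftrightarrow> finite (comp_minus_V a S x)"

definition ecard :: "'a set \<Rightarrow> ennreal" where
  "ecard A = (if finite A then of_nat (card A) else \<infinity>)"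

definition p_cut_E :: "(nat \<Rightarrow> nat) \<Rightarrow> real" where
  "p_cut_E a = Sup {p. 0 \<le> p \<and> p \<le> 1 \<and>
     (INF S\<in>{S. edge_cutset a 0 S}.
        \<integral>\<^sup>+ \<omega>. ecard (cluster_E a \<omega> 0 \<inter> S) \<partial>(perc a p)) = 0}"

definition p_cut_V :: "(nat \<Rightarrow> nat) \<Rightarrow> real" where
  "p_cut_V a = Sup {p. 0 \<le> p \<and> p \<le> 1 \<and>
     (INF S\<in>{S. vertex_cutset a 0 S}.
        \<integral>\<^sup>+ \<omega>. ecard (cluster_V a \<omega> 0 \<inter> S) \<partial>(perc a p)) = 0}"

end

(*
  Write q = 1 - p for the probability that an edge is closed.  The origin reaches m iff each of
  the levels 0, ..., m-1 contains an open edge, which has probability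
  P_q(m) = prod_{i<m} (1 - q^(a i)).  A single vertex {m} is a vertex cutset and every vertex
  cutset contains one, so p is below p_cut_V iff inf_m P_q(m) = 0.  The a m edges of level m
  form an edge cutset, whose expected number of open cluster edges is a m * P_q(m) * p, so p is
  below p_cut_E as soon as inf_m a m * P_q(m) = 0.

  Let inf_m P_q(m) = 0 and q < q'.  If a m * P_q'(m) >= c > 0 for all m, then, since
  n * rho^n <= 1 / (1 - rho) for rho = q / q' < 1, each q^(a i) is bounded by a constant times
  q'^(a i) * P_q'(i) = P_q'(i) - P_q'(i+1).  The tails of sum_i q^(a i) are thus controlled by
  P_q'(M) <= P_q(M), which is small for suitable M, and then P_q(n) >= P_q(M) / 2 for all
  n >= M: a contradiction.  Hence every p' < p with p below p_cut_V is below p_cut_E.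
*)
theory Submission
  imports Defs
begin

definition level :: "(nat \<Rightarrow> nat) \<Rightarrow> nat \<Rightarrow> (nat \<times> nat) set" where
  "level a n = {n} \<times> {..<a n}"

lemma level_subset_edges: "level a n \<subseteq> edges a"
  by (auto simp: level_def edges_def)

lemma mem_adj_of_iff:
  "(u, v) \<in> adj_of F \<longleftrightarrow> (\<exists>k. (u, k) \<in> F \<and> v = Suc u \<or> (v, k) \<in> F \<and> u = Suc v)"
  by (auto simp: adj_of_def endpoints_def doubleton_eq_iff) (metis fst_conv)+

lemma rtrancl_adj_of_le:
  assumes "(u, v) \<in> (adj_of F)\<^sup>*" "u \<le> m" "\<And>k. (m, k) \<notin> F"
  shows "v \<le> m"
  using assms(1,2)
proof (induction rule: rtrancl_induct)
  case (step v w)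
  then show ?case
    using assms(3) by (auto simp: mem_adj_of_iff le_Suc_eq dest: le_neq_implies_less)
qed

lemma mem_cluster_V_0_iff: "m \<in> cluster_V a \<omega> 0 \<longleftrightarrow> (\<forall>i<m. \<exists>k<a i. \<omega> (i, k))"
proof
  assume "m \<in> cluster_V a \<omega> 0"
  then have "(0, m) \<in> (adj_of (open_edges a \<omega>))\<^sup>*" by (simp add: cluster_V_def)
  then show "\<forall>i<m. \<exists>k<a i. \<omega> (i, k)"
  proof (induction rule: rtrancl_induct)
    case (step u v)
    then show ?case
      by (auto simp: mem_adj_of_iff open_edges_def edges_def less_Suc_eq)
  qed simp
next
  assume "\<forall>i<m. \<exists>k<a i. \<omega> (i, k)"
  then show "m \<in> cluster_V a \<omega> 0"
  proof (induction m)
    case (Suc m)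
    then obtain k where "k < a m" "\<omega> (m, k)" by auto
    then have "(m, Suc m) \<in> adj_of (open_edges a \<omega>)"
      by (auto simp: mem_adj_of_iff open_edges_def edges_def)
    with Suc show ?case by (auto simp: cluster_V_def intro: rtrancl_into_rtrancl)
  qed (simp add: cluster_V_def)
qed

lemma cluster_E_Int_level:
  "cluster_E a \<omega> 0 \<inter> level a m =
    (if m \<in> cluster_V a \<omega> 0 then {m} \<times> {k. k < a m \<and> \<omega> (m, k)} else {})"
proof -
  have "Suc m \<in> cluster_V a \<omega> 0 \<Longrightarrow> m \<in> cluster_V a \<omega> 0"
    by (simp add: mem_cluster_V_0_iff)
  then show ?thesis
    by (auto simp: cluster_E_def level_def open_edges_def edges_def endpoints_def)
qed

lemma edge_cutset_level: "edge_cutset a 0 (level a m)"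
proof -
  have "(m, k) \<notin> edges a - level a m" for k
    by (auto simp: level_def edges_def)
  then have "comp_minus_E a (level a m) 0 \<subseteq> {..m}"
    by (auto simp: comp_minus_E_def intro: rtrancl_adj_of_le)
  then show ?thesis
    by (auto simp: edge_cutset_def level_subset_edges intro: finite_subset)
qed

lemma vertex_cutset_singleton: "vertex_cutset a 0 {m}"
proof -
  have "comp_minus_V a {m} 0 \<subseteq> {..m}"
    by (auto simp: comp_minus_V_def endpoints_def intro: rtrancl_adj_of_le)
  then show ?thesis
    by (auto simp: vertex_cutset_def intro: finite_subset)
qed

lemma vertex_cutset_nonempty:
  assumes "\<And>n. 0 < a n" "vertex_cutset a 0 S"
  shows "S \<noteq> {}"
proof
  assume "S = {}"
  have "(n, Suc n) \<in> adj_of (edges a)" for n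
    using assms(1)[of n] by (auto simp: mem_adj_of_iff edges_def)
  then have "(0, n) \<in> (adj_of (edges a))\<^sup>*" for n
    by (induction n) (auto intro: rtrancl_into_rtrancl)
  then have "comp_minus_V a S 0 = UNIV"
    using \<open>S = {}\<close> by (auto simp: comp_minus_V_def)
  with assms(2) show False by (simp add: vertex_cutset_def)
qed

lemma ecard_mono: "A \<subseteq> B \<Longrightarrow> ecard A \<le> ecard B"
  by (auto simp: ecard_def card_mono dest: finite_subset)

definition reach_prob :: "(nat \<Rightarrow> nat) \<Rightarrow> real \<Rightarrow> nat \<Rightarrow> real" where
  "reach_prob a q n = (\<Prod>i<n. 1 - q ^ a i)"

lemma reach_prob_Suc: "reach_prob a q (Suc n) = reach_prob a q n * (1 - q ^ a n)"
  by (simp add: reach_prob_def)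

lemma reach_prob_split:
  "m \<le> n \<Longrightarrow> reach_prob a q n = reach_prob a q m * (\<Prod>i\<in>{m..<n}. 1 - q ^ a i)"
  by (simp add: reach_prob_def lessThan_atLeast0 prod.atLeastLessThan_concat)

lemma reach_prob_nonneg: "0 \<le> q \<Longrightarrow> q \<le> 1 \<Longrightarrow> 0 \<le> reach_prob a q n"
  unfolding reach_prob_def by (intro prod_nonneg) (auto intro: power_le_one)

lemma reach_prob_pos: "(\<And>n. 0 < a n) \<Longrightarrow> 0 \<le> q \<Longrightarrow> q < 1 \<Longrightarrow> 0 < reach_prob a q n"
  unfolding reach_prob_def by (intro prod_pos) (auto simp: power_less_one_iff)

lemma reach_prob_antimono:
  "0 \<le> q \<Longrightarrow> q \<le> q' \<Longrightarrow> q' \<le> 1 \<Longrightarrow> reach_prob a q' n \<le> reach_prob a q n"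
  unfolding reach_prob_def by (intro prod_mono) (auto intro: power_le_one power_mono)

lemma reach_prob_decreasing:
  assumes "0 \<le> q" "q \<le> 1" "m \<le> n"
  shows "reach_prob a q n \<le> reach_prob a q m"
proof -
  have "(\<Prod>i\<in>{m..<n}. 1 - q ^ a i) \<le> 1"
    using assms by (intro prod_le_1) (auto intro: power_le_one)
  then show ?thesis
    using reach_prob_split[OF assms(3)] reach_prob_nonneg[OF assms(1,2)]
    by (simp add: mult_left_le)
qed

lemma reach_prob_ge_one_minus_sum:
  assumes "0 \<le> q" "q \<le> 1" "m \<le> n"
  shows "reach_prob a q m * (1 - (\<Sum>i\<in>{m..<n}. q ^ a i)) \<le> reach_prob a q n"
  using assms Weierstrass_prod_ineq[of "{m..<n}" "\<lambda>i. q ^ a i"]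
  by (simp add: reach_prob_split power_le_one mult_left_mono reach_prob_nonneg)

lemma reach_prob_telescope:
  "m \<le> n \<Longrightarrow> (\<Sum>i\<in>{m..<n}. q ^ a i * reach_prob a q i) = reach_prob a q m - reach_prob a q n"
  using sum_Suc_diff'[of m n "reach_prob a q"]
  by (simp add: reach_prob_Suc algebra_simps sum_subtractf sum_negf)

lemma real_mult_power_le:
  fixes \<rho> :: real
  assumes "0 \<le> \<rho>" "\<rho> < 1"
  shows "real n * \<rho> ^ n \<le> 1 / (1 - \<rho>)"
proof -
  have "real n * \<rho> ^ n = (\<Sum>j<n. \<rho> ^ n)" by simp
  also have "\<dots> \<le> (\<Sum>j<n. \<rho> ^ j)"
    using assms by (intro sum_mono power_decreasing) auto
  also have "\<dots> = (1 - \<rho> ^ n) / (1 - \<rho>)"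
    using assms by (simp add: sum_gp_strict)
  also have "\<dots> \<le> 1 / (1 - \<rho>)"
    using assms by (intro divide_right_mono) auto
  finally show ?thesis .
qed

lemma reach_prob_ge_half:
  assumes "0 \<le> q" "q \<le> 1" and "\<And>n. M \<le> n \<Longrightarrow> (\<Sum>i\<in>{M..<n}. q ^ a i) \<le> 1 / 2"
  shows "reach_prob a q M / 2 \<le> reach_prob a q n"
proof (cases "M \<le> n")
  case True
  have "reach_prob a q M / 2 = reach_prob a q M * (1 / 2)"
    by simp
  also have "\<dots> \<le> reach_prob a q M * (1 - (\<Sum>i\<in>{M..<n}. q ^ a i))"
    using assms(1,2) assms(3)[OF True] reach_prob_nonneg[of q a M] by (intro mult_left_mono) auto
  also have "\<dots> \<le> reach_prob a q n"
    using assms(1,2) True by (rule reach_prob_ge_one_minus_sum)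
  finally show ?thesis .
next
  case False
  then have "reach_prob a q M \<le> reach_prob a q n"
    using assms(1,2) by (intro reach_prob_decreasing) auto
  then show ?thesis
    using reach_prob_nonneg[OF assms(1,2), of a M] by simp
qed

lemma power_le_weighted_reach_prob:
  assumes "0 \<le> q" "q < q'" "q' \<le> 1" and "c \<le> real (a i) * reach_prob a q' i"
  shows "c * q ^ a i \<le> q' ^ a i * reach_prob a q' i / (1 - q / q')"
proof -
  define \<rho> where "\<rho> = q / q'"
  have "0 < q'" "0 \<le> \<rho>" "\<rho> < 1"
    using assms by (auto simp: \<rho>_def)
  have "0 \<le> reach_prob a q' i"
    using assms by (intro reach_prob_nonneg) auto
  have "c * q ^ a i \<le> (real (a i) * reach_prob a q' i) * q ^ a i"
    using assms by (intro mult_right_mono) auto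
  also have "\<dots> = (real (a i) * \<rho> ^ a i) * (q' ^ a i * reach_prob a q' i)"
    using \<open>0 < q'\<close> by (simp add: \<rho>_def power_divide)
  also have "\<dots> \<le> 1 / (1 - \<rho>) * (q' ^ a i * reach_prob a q' i)"
    using \<open>0 \<le> \<rho>\<close> \<open>\<rho> < 1\<close> \<open>0 < q'\<close> \<open>0 \<le> reach_prob a q' i\<close>
    by (intro mult_right_mono real_mult_power_le) auto
  finally show ?thesis
    by (simp add: \<rho>_def)
qed

lemma weighted_reach_prob_small:
  assumes a_pos: "\<And>n. 0 < a n" and q: "0 \<le> q" "q < q'" "q' \<le> 1"
    and reach_small: "\<And>\<epsilon>. 0 < \<epsilon> \<Longrightarrow> \<exists>m. reach_prob a q m < \<epsilon>"
    and "0 < \<epsilon>"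
  shows "\<exists>m. real (a m) * reach_prob a q' m < \<epsilon>"
proof (rule ccontr)
  assume "\<not> ?thesis"
  then have lower: "\<epsilon> \<le> real (a m) * reach_prob a q' m" for m
    by (simp add: not_less)
  define K where "K = 1 / (1 - q / q')"
  have "0 < K"
    using q by (simp add: K_def)
  have term_le: "q ^ a i \<le> K / \<epsilon> * (q' ^ a i * reach_prob a q' i)" for i
  proof -
    have "\<epsilon> * q ^ a i \<le> K * (q' ^ a i * reach_prob a q' i)"
      using power_le_weighted_reach_prob[OF q lower[of i]] by (simp add: K_def)
    then show ?thesis
      using \<open>0 < \<epsilon>\<close> by (simp add: field_simps)
  qed
  obtain M where M: "reach_prob a q M < \<epsilon> / (2 * K)"
    using reach_small[of "\<epsilon> / (2 * K)"] \<open>0 < \<epsilon>\<close> \<open>0 < K\<close> by auto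
  have tail_sum: "(\<Sum>i\<in>{M..<n}. q ^ a i) \<le> 1 / 2" if "M \<le> n" for n
  proof -
    have "(\<Sum>i\<in>{M..<n}. q ^ a i) \<le> K / \<epsilon> * (\<Sum>i\<in>{M..<n}. q' ^ a i * reach_prob a q' i)"
      unfolding sum_distrib_left by (intro sum_mono term_le)
    also have "\<dots> = K / \<epsilon> * (reach_prob a q' M - reach_prob a q' n)"
      by (simp only: reach_prob_telescope[OF that])
    also have "\<dots> \<le> K / \<epsilon> * reach_prob a q M"
      using q \<open>0 < K\<close> \<open>0 < \<epsilon>\<close> reach_prob_antimono[of q q' a M] reach_prob_nonneg[of q' a n]
      by (intro mult_left_mono) auto
    also have "\<dots> \<le> 1 / 2"
      using M \<open>0 < K\<close> \<open>0 < \<epsilon>\<close> by (simp add: field_simps)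
    finally show ?thesis .
  qed
  have "0 < reach_prob a q M"
    using q by (intro reach_prob_pos a_pos) auto
  then obtain n where "reach_prob a q n < reach_prob a q M / 2"
    using reach_small[of "reach_prob a q M / 2"] by auto
  moreover have "reach_prob a q M / 2 \<le> reach_prob a q n"
    using q tail_sum by (intro reach_prob_ge_half) auto
  ultimately show False by simp
qed

lemma INF_ennreal_eq_0_iff:
  fixes f :: "'a \<Rightarrow> real"
  assumes "\<And>x. 0 \<le> f x"
  shows "(INF x. ennreal (f x)) = 0 \<longleftrightarrow> (\<forall>\<epsilon>>0. \<exists>x. f x < \<epsilon>)"
proof
  assume INF_0: "(INF x. ennreal (f x)) = 0"
  show "\<forall>\<epsilon>>0. \<exists>x. f x < \<epsilon>"
  proof (intro allI impI)
    fix \<epsilon> :: real assume "0 < \<epsilon>"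
    then have "(INF x. ennreal (f x)) < ennreal \<epsilon>"
      using INF_0 by simp
    then obtain x where "ennreal (f x) < ennreal \<epsilon>"
      by (auto simp: INF_less_iff)
    then show "\<exists>x. f x < \<epsilon>"
      using assms by (auto simp: ennreal_less_iff)
  qed
next
  assume small: "\<forall>\<epsilon>>0. \<exists>x. f x < \<epsilon>"
  have "(INF x. ennreal (f x)) \<le> 0 + ennreal \<epsilon>" if "0 < \<epsilon>" for \<epsilon>
  proof -
    obtain x where "f x < \<epsilon>" using small \<open>0 < \<epsilon>\<close> by blast
    then show ?thesis
      using INF_lower2[of x UNIV "\<lambda>x. ennreal (f x)" "ennreal \<epsilon>"] by (simp add: ennreal_leI)
  qed
  then have "(INF x. ennreal (f x)) \<le> 0"
    by (rule ennreal_le_epsilon) auto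
  then show "(INF x. ennreal (f x)) = 0"
    by simp
qed

lemma (in product_prob_space) indep_vars_components:
  "P.indep_vars M (\<lambda>i \<omega>. \<omega> i) I"
proof (cases "I = {}")
  case True
  then show ?thesis
    unfolding P.indep_vars_def P.indep_sets_def by simp
next
  case False
  have rv: "P.random_variable (M i) (\<lambda>\<omega>. \<omega> i)" if "i \<in> I" for i
    using measurable_component_singleton[OF that] .
  have "distr (PiM I M) (PiM I M) (\<lambda>\<omega>. restrict \<omega> I) = distr (PiM I M) (PiM I M) (\<lambda>\<omega>. \<omega>)"
    by (rule distr_cong) (auto simp: space_PiM)
  also have "\<dots> = PiM I (\<lambda>i. distr (PiM I M) (M i) (\<lambda>\<omega>. \<omega> i))"
    by (auto intro!: PiM_cong simp: distr_PiM_component M.prob_space_axioms)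
  finally show ?thesis
    by (subst P.indep_vars_iff_distr_eq_PiM'[OF False rv]) auto
qed

lemma (in product_prob_space) prob_PiM_Collect_blocks:
  assumes "finite K" "disjoint_family_on J K" "\<And>j. j \<in> K \<Longrightarrow> J j \<subseteq> I"
    and "\<And>j. j \<in> K \<Longrightarrow> Measurable.pred (PiM (J j) M) (Q j)"
  shows "P.prob {\<omega>\<in>space (PiM I M). \<forall>j\<in>K. Q j (restrict \<omega> (J j))}
       = (\<Prod>j\<in>K. P.prob {\<omega>\<in>space (PiM I M). Q j (restrict \<omega> (J j))})"
proof (cases "K = {}")
  case True
  then show ?thesis by (simp add: P.prob_space)
next
  case False
  have "P.indep_vars (\<lambda>j. PiM (J j) M) (\<lambda>j \<omega>. restrict \<omega> (J j)) K"
    using P.indep_vars_restrict[OF indep_vars_components, of K J] assms(2,3) by simp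
  then have "P.indep_vars (\<lambda>_. count_space UNIV) (\<lambda>j \<omega>. Q j (restrict \<omega> (J j))) K"
    by (rule P.indep_vars_compose2) (use assms(4) in simp)
  from P.indep_varsD_finite[OF this False assms(1), of "\<lambda>_. {True}"]
  moreover have "(\<Inter>j\<in>K. {\<omega>\<in>space (PiM I M). Q j (restrict \<omega> (J j))})
      = {\<omega>\<in>space (PiM I M). \<forall>j\<in>K. Q j (restrict \<omega> (J j))}"
    using False by auto
  ultimately show ?thesis
    by (simp add: vimage_def Int_def conj_commute)
qed

lemma pred_PiM_component:
  "e \<in> L \<Longrightarrow> Measurable.pred (PiM L (\<lambda>_. measure_pmf (q :: bool pmf))) (\<lambda>\<omega>. \<omega> e)"
  using measurable_component_singleton[of e L "\<lambda>_. measure_pmf q"] by simp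

lemma pred_open_in_level:
  "Measurable.pred (PiM (level a n) (\<lambda>_. measure_pmf q)) (\<lambda>\<omega>. \<exists>k<a n. \<omega> (n, k))"
proof -
  have "(\<lambda>\<omega>. \<exists>k<a n. \<omega> (n, k)) = (\<lambda>\<omega>. \<exists>k\<in>{..<a n}. \<omega> (n, k))"
    by auto
  also have "Measurable.pred (PiM (level a n) (\<lambda>_. measure_pmf q)) \<dots>"
    by (intro pred_intros_finite pred_PiM_component) (auto simp: level_def)
  finally show ?thesis .
qed

locale bond_percolation =
  fixes a :: "nat \<Rightarrow> nat" and p :: real
  assumes p_nonneg: "0 \<le> p" and p_le_1: "p \<le> 1"
begin

sublocale Perc: product_prob_space "\<lambda>_. measure_pmf (bernoulli_pmf p)" "edges a"
  by unfold_locales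

lemma perc_eq: "perc a p = PiM (edges a) (\<lambda>_. measure_pmf (bernoulli_pmf p))"
  by (simp add: perc_def)

lemma prob_Collect_levels:
  assumes "finite K"
    and "\<And>j. j \<in> K \<Longrightarrow> Measurable.pred (PiM (level a j) (\<lambda>_. measure_pmf (bernoulli_pmf p))) (Q j)"
  shows "measure (perc a p) {\<omega>\<in>space (perc a p). \<forall>j\<in>K. Q j (restrict \<omega> (level a j))}
       = (\<Prod>j\<in>K. measure (perc a p) {\<omega>\<in>space (perc a p). Q j (restrict \<omega> (level a j))})"
  unfolding perc_eq using assms
  by (intro Perc.prob_PiM_Collect_blocks) (auto simp: disjoint_family_on_def level_def edges_def)

lemma prob_edge_open:
  assumes "e \<in> edges a"
  shows "measure (perc a p) {\<omega>\<in>space (perc a p). \<omega> e} = p"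
proof -
  have "emeasure (perc a p) {\<omega>\<in>space (perc a p). \<omega> e \<in> {True}} = emeasure (bernoulli_pmf p) {True}"
    unfolding perc_eq by (rule Perc.emeasure_PiM_Collect_single[OF assms]) simp
  then show ?thesis
    using p_nonneg p_le_1 by (simp add: measure_def emeasure_pmf_single)
qed

lemma prob_level_open:
  "measure (perc a p) {\<omega>\<in>space (perc a p). \<exists>k<a n. \<omega> (n, k)} = 1 - (1 - p) ^ a n"
proof -
  let ?closed = "{\<omega>\<in>space (perc a p). \<forall>e\<in>level a n. \<omega> e \<in> {False}}"
  have "emeasure (perc a p) ?closed = (\<Prod>e\<in>level a n. emeasure (bernoulli_pmf p) {False})"
    unfolding perc_eq by (rule Perc.emeasure_PiM_Collect) (auto simp: level_def edges_def)
  also have "\<dots> = ennreal ((1 - p) ^ a n)"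
    using p_nonneg p_le_1
    by (simp add: emeasure_pmf_single prod_ennreal ennreal_power level_def card_cartesian_product)
  finally have "measure (perc a p) ?closed = (1 - p) ^ a n"
    using p_le_1 by (simp add: measure_def)
  moreover have "{\<omega>\<in>space (perc a p). \<exists>k<a n. \<omega> (n, k)} = space (perc a p) - ?closed"
    by (auto simp: level_def)
  moreover have "?closed \<in> sets (perc a p)"
    unfolding perc_eq by measurable (auto simp: level_subset_edges[THEN subsetD] level_def)
  ultimately show ?thesis
    unfolding perc_eq by (simp add: Perc.P.prob_compl)
qed

lemma pred_reach: "Measurable.pred (perc a p) (\<lambda>\<omega>. m \<in> cluster_V a \<omega> 0)"
proof -
  have "(\<lambda>\<omega>. m \<in> cluster_V a \<omega> 0) = (\<lambda>\<omega>. \<forall>j\<in>{..<m}. \<exists>k\<in>{..<a j}. \<omega> (j, k))"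
    by (auto simp: mem_cluster_V_0_iff)
  then show ?thesis
    unfolding perc_eq by (auto intro!: pred_intros_finite pred_PiM_component simp: edges_def)
qed

lemma emeasure_perc: "emeasure (perc a p) A = ennreal (measure (perc a p) A)"
  unfolding perc_eq by (rule Perc.P.emeasure_eq_measure)

lemma prob_reach:
  "measure (perc a p) {\<omega>\<in>space (perc a p). m \<in> cluster_V a \<omega> 0} = reach_prob a (1 - p) m"
proof -
  define Q where "Q j = (\<lambda>\<omega>. \<exists>l<a j. \<omega> (j, l))" for j
  have Q_restrict: "Q j (restrict \<omega> (level a j)) = Q j \<omega>" for j \<omega>
    by (auto simp: Q_def level_def)
  have "{\<omega>\<in>space (perc a p). m \<in> cluster_V a \<omega> 0}
      = {\<omega>\<in>space (perc a p). \<forall>j\<in>{..<m}. Q j (restrict \<omega> (level a j))}"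
    by (simp add: Q_restrict) (auto simp: Q_def mem_cluster_V_0_iff)
  also have "measure (perc a p) \<dots>
      = (\<Prod>j<m. measure (perc a p) {\<omega>\<in>space (perc a p). Q j (restrict \<omega> (level a j))})"
    by (rule prob_Collect_levels[where Q = Q]) (simp_all only: Q_def pred_open_in_level finite_lessThan)
  also have "\<dots> = reach_prob a (1 - p) m"
    by (simp add: Q_restrict, simp add: Q_def reach_prob_def prob_level_open)
  finally show ?thesis .
qed

lemma prob_reach_and_open:
  assumes "k < a m"
  shows "measure (perc a p) {\<omega>\<in>space (perc a p). m \<in> cluster_V a \<omega> 0 \<and> \<omega> (m, k)}
       = reach_prob a (1 - p) m * p"
proof -
  define Q where "Q j = (if j < m then (\<lambda>\<omega>. \<exists>l<a j. \<omega> (j, l)) else (\<lambda>\<omega>. \<omega> (m, k)))" for j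
  let ?E = "\<lambda>j. {\<omega>\<in>space (perc a p). Q j (restrict \<omega> (level a j))}"
  have Q_restrict: "Q j (restrict \<omega> (level a j)) = Q j \<omega>" if "j \<le> m" for j \<omega>
    using that assms by (auto simp: Q_def level_def)
  have "(\<forall>j\<in>{..m}. Q j (restrict \<omega> (level a j))) \<longleftrightarrow> (\<forall>j\<in>{..m}. Q j \<omega>)" for \<omega>
    by (simp add: Q_restrict)
  also have "(\<forall>j\<in>{..m}. Q j \<omega>) \<longleftrightarrow> m \<in> cluster_V a \<omega> 0 \<and> \<omega> (m, k)" for \<omega>
    by (auto simp: mem_cluster_V_0_iff Q_def le_less)
  finally have "{\<omega>\<in>space (perc a p). m \<in> cluster_V a \<omega> 0 \<and> \<omega> (m, k)}
      = {\<omega>\<in>space (perc a p). \<forall>j\<in>{..m}. Q j (restrict \<omega> (level a j))}"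
    by simp
  also have "measure (perc a p) \<dots> = (\<Prod>j\<in>{..m}. measure (perc a p) (?E j))"
  proof (rule prob_Collect_levels[where Q = Q])
    fix j assume "j \<in> {..m}"
    then consider "j < m" | "j = m" by fastforce
    then show "Measurable.pred (PiM (level a j) (\<lambda>_. measure_pmf (bernoulli_pmf p))) (Q j)"
    proof cases
      case 1
      then have "Q j = (\<lambda>\<omega>. \<exists>l<a j. \<omega> (j, l))" by (simp add: Q_def)
      then show ?thesis by (simp only: pred_open_in_level)
    next
      case 2
      then have "Q j = (\<lambda>\<omega>. \<omega> (m, k))" by (simp add: Q_def)
      then show ?thesis
        using 2 assms by (simp only:) (rule pred_PiM_component, simp add: level_def)
    qed
  qed simp
  also have "\<dots> = (\<Prod>j<m. measure (perc a p) (?E j)) * measure (perc a p) (?E m)"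
    by (simp flip: lessThan_Suc_atMost)
  also have "(\<Prod>j<m. measure (perc a p) (?E j)) = reach_prob a (1 - p) m"
    unfolding reach_prob_def
    by (intro prod.cong refl) (simp add: Q_restrict, simp add: Q_def prob_level_open)
  also have "measure (perc a p) (?E m) = p"
    using assms by (simp add: Q_restrict, simp add: Q_def prob_edge_open edges_def)
  finally show ?thesis .
qed

lemma nn_integral_cluster_V_singleton:
  "(\<integral>\<^sup>+ \<omega>. ecard (cluster_V a \<omega> 0 \<inter> {m}) \<partial>perc a p) = ennreal (reach_prob a (1 - p) m)"
proof -
  have "(\<integral>\<^sup>+ \<omega>. ecard (cluster_V a \<omega> 0 \<inter> {m}) \<partial>perc a p)
      = (\<integral>\<^sup>+ \<omega>. indicator {\<omega>\<in>space (perc a p). m \<in> cluster_V a \<omega> 0} \<omega> \<partial>perc a p)"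
    by (intro nn_integral_cong) (auto simp: ecard_def indicator_def)
  also have "\<dots> = ennreal (reach_prob a (1 - p) m)"
    using pred_reach by (simp add: predE emeasure_perc prob_reach)
  finally show ?thesis .
qed

lemma nn_integral_cluster_E_level:
  "(\<integral>\<^sup>+ \<omega>. ecard (cluster_E a \<omega> 0 \<inter> level a m) \<partial>perc a p)
     = ennreal (real (a m) * reach_prob a (1 - p) m * p)"
proof -
  let ?A = "\<lambda>k. {\<omega>\<in>space (perc a p). m \<in> cluster_V a \<omega> 0 \<and> \<omega> (m, k)}"
  have A_sets: "?A k \<in> sets (perc a p)" if "k < a m" for k
    using pred_reach that unfolding perc_eq
    by (intro predE pred_intros_logic pred_PiM_component) (auto simp: edges_def)
  have "ecard (cluster_E a \<omega> 0 \<inter> level a m) = (\<Sum>k<a m. indicator (?A k) \<omega>)"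
    if "\<omega> \<in> space (perc a p)" for \<omega>
  proof -
    have "cluster_E a \<omega> 0 \<inter> level a m = {m} \<times> {k\<in>{..<a m}. \<omega> \<in> ?A k}"
      using that by (auto simp: cluster_E_Int_level)
    then have "ecard (cluster_E a \<omega> 0 \<inter> level a m) = (\<Sum>k\<in>{k\<in>{..<a m}. \<omega> \<in> ?A k}. 1)"
      by (simp add: ecard_def card_cartesian_product)
    also have "\<dots> = (\<Sum>k<a m. indicator (?A k) \<omega>)"
      unfolding indicator_def of_bool_def by (rule sum.inter_filter) simp
    finally show ?thesis .
  qed
  then have "(\<integral>\<^sup>+ \<omega>. ecard (cluster_E a \<omega> 0 \<inter> level a m) \<partial>perc a p)
      = (\<integral>\<^sup>+ \<omega>. (\<Sum>k<a m. indicator (?A k) \<omega>) \<partial>perc a p)"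
    by (rule nn_integral_cong)
  also have "\<dots> = (\<Sum>k<a m. \<integral>\<^sup>+ \<omega>. indicator (?A k) \<omega> \<partial>perc a p)"
    using A_sets by (intro nn_integral_sum) auto
  also have "\<dots> = (\<Sum>k<a m. ennreal (reach_prob a (1 - p) m * p))"
    using A_sets by (simp add: emeasure_perc prob_reach_and_open)
  also have "\<dots> = ennreal (real (a m) * reach_prob a (1 - p) m * p)"
    by (simp add: ennreal_of_nat_eq_real_of_nat ennreal_mult' mult.assoc)
  finally show ?thesis .
qed

lemma vertex_cut_INF_eq:
  assumes "\<And>n. 0 < a n"
  shows "(INF S\<in>{S. vertex_cutset a 0 S}. \<integral>\<^sup>+ \<omega>. ecard (cluster_V a \<omega> 0 \<inter> S) \<partial>perc a p)
       = (INF m. ennreal (reach_prob a (1 - p) m))"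
proof (rule antisym)
  show "(INF S\<in>{S. vertex_cutset a 0 S}. \<integral>\<^sup>+ \<omega>. ecard (cluster_V a \<omega> 0 \<inter> S) \<partial>perc a p)
      \<le> (INF m. ennreal (reach_prob a (1 - p) m))"
  proof (rule INF_greatest)
    fix m
    show "(INF S\<in>{S. vertex_cutset a 0 S}. \<integral>\<^sup>+ \<omega>. ecard (cluster_V a \<omega> 0 \<inter> S) \<partial>perc a p)
        \<le> ennreal (reach_prob a (1 - p) m)"
      by (rule INF_lower2[of "{m}"])
        (simp_all add: vertex_cutset_singleton nn_integral_cluster_V_singleton)
  qed
next
  show "(INF m. ennreal (reach_prob a (1 - p) m))
      \<le> (INF S\<in>{S. vertex_cutset a 0 S}. \<integral>\<^sup>+ \<omega>. ecard (cluster_V a \<omega> 0 \<inter> S) \<partial>perc a p)"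
  proof (rule INF_greatest)
    fix S assume "S \<in> {S. vertex_cutset a 0 S}"
    then have "S \<noteq> {}"
      using assms by (intro vertex_cutset_nonempty[where a = a]) auto
    then obtain m where "m \<in> S" by blast
    have "(INF m. ennreal (reach_prob a (1 - p) m))
        \<le> (\<integral>\<^sup>+ \<omega>. ecard (cluster_V a \<omega> 0 \<inter> {m}) \<partial>perc a p)"
      unfolding nn_integral_cluster_V_singleton by (rule INF_lower) simp
    also have "\<dots> \<le> (\<integral>\<^sup>+ \<omega>. ecard (cluster_V a \<omega> 0 \<inter> S) \<partial>perc a p)"
      using \<open>m \<in> S\<close> by (intro nn_integral_mono ecard_mono) auto
    finally show "(INF m. ennreal (reach_prob a (1 - p) m))
        \<le> (\<integral>\<^sup>+ \<omega>. ecard (cluster_V a \<omega> 0 \<inter> S) \<partial>perc a p)" .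
  qed
qed

lemma edge_cut_INF_le:
  "(INF S\<in>{S. edge_cutset a 0 S}. \<integral>\<^sup>+ \<omega>. ecard (cluster_E a \<omega> 0 \<inter> S) \<partial>perc a p)
     \<le> (INF m. ennreal (real (a m) * reach_prob a (1 - p) m * p))"
proof (rule INF_greatest)
  fix m
  show "(INF S\<in>{S. edge_cutset a 0 S}. \<integral>\<^sup>+ \<omega>. ecard (cluster_E a \<omega> 0 \<inter> S) \<partial>perc a p)
      \<le> ennreal (real (a m) * reach_prob a (1 - p) m * p)"
    by (rule INF_lower2[of "level a m"])
      (simp_all add: edge_cutset_level nn_integral_cluster_E_level)
qed

lemma vertex_cut_INF_eq_0_iff:
  assumes "\<And>n. 0 < a n"
  shows "(INF S\<in>{S. vertex_cutset a 0 S}. \<integral>\<^sup>+ \<omega>. ecard (cluster_V a \<omega> 0 \<inter> S) \<partial>perc a p) = 0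
     \<longleftrightarrow> (\<forall>\<epsilon>>0. \<exists>m. reach_prob a (1 - p) m < \<epsilon>)"
  unfolding vertex_cut_INF_eq[OF assms]
  using p_nonneg p_le_1 by (intro INF_ennreal_eq_0_iff reach_prob_nonneg) auto

lemma edge_cut_INF_eq_0:
  assumes "\<And>\<epsilon>. 0 < \<epsilon> \<Longrightarrow> \<exists>m. real (a m) * reach_prob a (1 - p) m * p < \<epsilon>"
  shows "(INF S\<in>{S. edge_cutset a 0 S}. \<integral>\<^sup>+ \<omega>. ecard (cluster_E a \<omega> 0 \<inter> S) \<partial>perc a p) = 0"
proof -
  have "0 \<le> real (a m) * reach_prob a (1 - p) m * p" for m
    using p_nonneg p_le_1 reach_prob_nonneg[of "1 - p" a m] by simp
  then have "(INF m. ennreal (real (a m) * reach_prob a (1 - p) m * p)) = 0"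
    using assms by (subst INF_ennreal_eq_0_iff) auto
  then show ?thesis
    using edge_cut_INF_le by simp
qed

end

lemma edge_cut_INF_eq_0_below_vertex:
  assumes a_pos: "\<And>n. 0 < a n" and "0 \<le> w" "w < x" "x \<le> 1"
    and "(INF S\<in>{S. vertex_cutset a 0 S}. \<integral>\<^sup>+ \<omega>. ecard (cluster_V a \<omega> 0 \<inter> S) \<partial>perc a x) = 0"
  shows "(INF S\<in>{S. edge_cutset a 0 S}. \<integral>\<^sup>+ \<omega>. ecard (cluster_E a \<omega> 0 \<inter> S) \<partial>perc a w) = 0"
proof -
  interpret x: bond_percolation a x using assms by unfold_locales auto
  interpret w: bond_percolation a w using assms by unfold_locales auto
  have reach_small: "\<exists>m. reach_prob a (1 - x) m < \<epsilon>" if "0 < \<epsilon>" for \<epsilon>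
    using assms(5) that by (simp add: x.vertex_cut_INF_eq_0_iff[OF a_pos])
  show ?thesis
  proof (rule w.edge_cut_INF_eq_0)
    fix \<epsilon> :: real assume "0 < \<epsilon>"
    have "\<exists>m. real (a m) * reach_prob a (1 - w) m < \<epsilon>"
      by (rule weighted_reach_prob_small[of a, OF a_pos _ _ _ reach_small \<open>0 < \<epsilon>\<close>]) (use assms in auto)
    then obtain m where m: "real (a m) * reach_prob a (1 - w) m < \<epsilon>" ..
    have "real (a m) * reach_prob a (1 - w) m * w \<le> real (a m) * reach_prob a (1 - w) m"
      using assms reach_prob_nonneg[of "1 - w" a m] by (intro mult_left_le) auto
    then have "real (a m) * reach_prob a (1 - w) m * w < \<epsilon>"
      using m by (rule le_less_trans)
    then show "\<exists>m. real (a m) * reach_prob a (1 - w) m * w < \<epsilon>" ..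
  qed
qed

lemma edge_cut_INF_at_0:
  "(INF S\<in>{S. edge_cutset a 0 S}. \<integral>\<^sup>+ \<omega>. ecard (cluster_E a \<omega> 0 \<inter> S) \<partial>perc a 0) = 0"
proof -
  interpret bond_percolation a 0 by unfold_locales auto
  show ?thesis by (rule edge_cut_INF_eq_0) auto
qed

lemma vertex_cut_INF_at_0:
  assumes "\<And>n. 0 < a n"
  shows "(INF S\<in>{S. vertex_cutset a 0 S}. \<integral>\<^sup>+ \<omega>. ecard (cluster_V a \<omega> 0 \<inter> S) \<partial>perc a 0) = 0"
proof -
  interpret bond_percolation a 0 by unfold_locales auto
  have "reach_prob a (1 - 0) 1 = 0"
    by (simp add: reach_prob_def)
  then have "\<forall>\<epsilon>>0. \<exists>m. reach_prob a (1 - 0) m < \<epsilon>"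
    by metis
  then show ?thesis
    using vertex_cut_INF_eq_0_iff[OF assms] by blast
qed

lemma cSup_le_cSup_below:
  fixes A B :: "real set"
  assumes "A \<noteq> {}" "bdd_above B" "0 \<in> B"
    and below: "\<And>x w. x \<in> A \<Longrightarrow> 0 < w \<Longrightarrow> w < x \<Longrightarrow> w \<in> B"
  shows "Sup A \<le> Sup B"
proof (rule cSup_least[OF assms(1)])
  fix x assume "x \<in> A"
  have "0 \<le> Sup B"
    using assms(3,2) by (rule cSup_upper)
  show "x \<le> Sup B"
  proof (cases "0 < x")
    case True
    then show ?thesis
    proof (rule dense_le_bounded)
      fix w assume "0 < w" "w < x"
      with \<open>x \<in> A\<close> have "w \<in> B" by (rule below)
      then show "w \<le> Sup B" using assms(2) by (rule cSup_upper)
    qed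
  next
    case False
    with \<open>0 \<le> Sup B\<close> show ?thesis by simp
  qed
qed

lemma p_cut_V_le_p_cut_E:
  assumes a_pos: "\<And>n. 0 < a n"
  shows "p_cut_V a \<le> p_cut_E a"
  unfolding p_cut_V_def p_cut_E_def
proof (rule cSup_le_cSup_below)
  show "{p. 0 \<le> p \<and> p \<le> 1 \<and>
      (INF S\<in>{S. vertex_cutset a 0 S}. \<integral>\<^sup>+ \<omega>. ecard (cluster_V a \<omega> 0 \<inter> S) \<partial>perc a p) = 0} \<noteq> {}"
    using vertex_cut_INF_at_0[of a, OF a_pos] by force
  show "bdd_above {p. 0 \<le> p \<and> p \<le> 1 \<and>
      (INF S\<in>{S. edge_cutset a 0 S}. \<integral>\<^sup>+ \<omega>. ecard (cluster_E a \<omega> 0 \<inter> S) \<partial>perc a p) = 0}"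
    by (rule bdd_aboveI[of _ 1]) auto
  show "0 \<in> {p. 0 \<le> p \<and> p \<le> 1 \<and>
      (INF S\<in>{S. edge_cutset a 0 S}. \<integral>\<^sup>+ \<omega>. ecard (cluster_E a \<omega> 0 \<inter> S) \<partial>perc a p) = 0}"
    using edge_cut_INF_at_0 by simp
qed (use edge_cut_INF_eq_0_below_vertex[of a, OF a_pos] in auto)

theorem proposition5p5:
  shows "\<not> (\<exists>a :: nat \<Rightarrow> nat. (\<forall>n. 0 < a n) \<and> p_cut_E a < p_cut_V a)"
proof
  assume "\<exists>a :: nat \<Rightarrow> nat. (\<forall>n. 0 < a n) \<and> p_cut_E a < p_cut_V a"
  then obtain a :: "nat \<Rightarrow> nat" where "\<forall>n. 0 < a n" "p_cut_E a < p_cut_V a"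
    by blast
  then show False
    using p_cut_V_le_p_cut_E[of a] by simp
qed


end
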